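(* Let $*\in\{s,w\}$. 1. For every matroid $M$ (an element of $\operatorname{Gr}(r,\mathbb{K}^n)$), the realization spaces $\operatorname{Real}^*_{\triangle}(M)$ and $\operatorname{Real}_{\mathcal{T}\triangle}(M)$ are contractible. These are taken with respect to the unique morphisms $\triangle\to\mathbb{K}$ and $\mathcal{T}\triangle\to\mathbb{K}$. 2. For every oriented matroid $M$ (an element of $\operatorname{Gr}(r,\mathbb{S}^n)$), $\operatorname{Real}_{\mathcal{T}\mathbb{R}}(M)$ is contractible. This is taken with respect to $\operatorname{ph}:\mathcal{T}\mathbb{R}\to\mathbb{S}$. 3. For every $M\in\operatorname{Gr}^*(r,\Phi^n)$, $\operatorname{Real}^*_{\mathcal{T}\mathbb{C}}(M)$ is contractible. This is taken with respect to $\operatorname{ph}:\mathcal{T}\mathbb{C}\to\Phi$. In particular all these realization spaces are nonempty.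
   Context: Hyperfields. A hyperfield $(F,\odot,\boxplus,1,0)$ has the following data and axioms. - $\odot$ is a commutative multiplication and $\boxplus$ is a hyperaddition assigning to each $x,y$ a nonempty subset $x\boxplus y\subseteq F$ (extended to subsets by unions). - $\boxplus$ is commutative and associative, and $x\boxplus 0=\{x\}$. - Each $x$ has a unique $-x$ with $0\in x\boxplus(-x)$, and $x\in y\boxplus z \iff z\in x\boxplus(-y)$. - $(F\setminus\{0\},\odot,1)$ is an abelian group $F^\times$, $0\odot x=0$, and $x\odot(y\boxplus z)=(x\odot y)\boxplus(x\odot z)$. A homomorphism (morphism) $h$ satisfies $h(0)=0$, $h(1)=1$, $h(xy)=h(x)h(y)$ and $h(x\boxplus y)\subseteq h(x)\boxplus h(y)$. Hyperfields, all with multiplication that of $\mathbb{C}$. - $\mathbb{K}=\{0,1\}$ with $1\boxplus1=\{0,1\}$. - $\mathbb{S}=\{-1,0,1\}$ with $1\boxplus1=\{1\}$, $(-1)\boxplus(-1)=\{-1\}$, $1\boxplus(-1)=\{-1,0,1\}$. - $\Phi=S^1\cup\{0\}$ with $a\boxplus a=\{a\}$ and $a\boxplus(-a)=S^1\cup\{0\}$; for $b\ne\pm a$, $a\boxplus b$ is the shortest closed arc joining $a,b$. - $\triangle=\mathbb{R}_{\ge0}$ with $a\boxplus b=[|a-b|,a+b]$. - $\mathcal{T}\triangle=\mathbb{R}_{\ge0}$ with $a\boxplus b=\{\max(a,b)\}$ if $a\ne b$, and $a\boxplus a=[0,a]$. - $\mathcal{T}\mathbb{R}=\mathbb{R}$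 with $a\boxplus b=\{a\}$ if $|a|>|b|$ or $a=b$, and $a\boxplus(-a)=[-|a|,|a|]$. - $\mathcal{T}\mathbb{C}=\mathbb{C}$ with: $a\boxplus b=\{a\}$ if $|a|>|b|$; $a\boxplus(-a)=\{x:|x|\le|a|\}$; if $|a|=|b|$ and $b\ne-a$, $a\boxplus b$ is the shortest closed arc from $a$ to $b$ on the circle of radius $|a|$. $\triangle,\mathcal{T}\triangle,\mathcal{T}\mathbb{R},\mathcal{T}\mathbb{C}$ are topologized with the Euclidean topology. Equivalently, the resulting realization spaces are the same if one uses the 0-coarse topology, whose open sets are the whole space and the Euclidean-open sets not containing $0$. $\operatorname{ph}(x)=x/|x|$ for $x\ne0$, and $\operatorname{ph}(0)=0$. The unique morphism to $\mathbb{K}$ sends $0\mapsto0$ and nonzero elements to $1$. Grassmannians. A strong Grassmann–Plücker (GP) function of rank $r$ on $E=\{1,\dots,n\}$ is a function $\varphi:E^r\to F$ with the following properties. - $\varphi$ is not identically $0$. - $\varphi$ is alternating. - For all $(i_1,\dots,i_{r+1})\in E^{r+1}$ and $(j_1,\dots,j_{r-1})\in E^{r-1}$: $$0\in\boxplus_{k=1}^{r+1}(-1)^k\varphi(i_1,\dots,\widehat{i_k},\dots,i_{r+1})\odot\varphi(i_k,j_1,\dots,j_{r-1}).$$ A weak GP function is a function $\varphi:E^r\to F$ with the following properties. - $\varphi$ is nonzero and alternating. - Its support is the set of bases of a matroid. - The relation holds whenever $|\{i\}\setminus\{j\}|=3$. $\operatorname{Gr}^s$ and $\operatorname{Gr}^w$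 are the sets of classes modulo $\varphi\sim\alpha\varphi$, $\alpha\in F^\times$. For $\mathbb{K},\mathbb{S},\mathcal{T}\mathbb{R},\mathcal{T}\triangle$ strong and weak coincide, and one writes $\operatorname{Gr}$ and $\operatorname{Real}$. The topology is the subspace topology of $(F^{E^r}\setminus\{0\})/F^\times$, which carries the product and quotient topologies. Realization spaces. For a morphism $f:F\to F'$ and $M\in\operatorname{Gr}^*(r,F'^n)$, $\operatorname{Real}^*_F(M)$ is the preimage of $M$ under $[\varphi]\mapsto[f\circ\varphi]$, with the subspace topology of $\operatorname{Gr}^*(r,F^n)$. *)

theory Defs
  imports "HOL-Analysis.Analysis"
begin

text \<open>All hyperfields considered are subsets of the complex numbers with the complex
multiplication, unit 1 and zero 0; the data recorded are the carrier, the hyperaddition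
and the (unique) hyperinverse.\<close>

record hyperfield =
  hcarrier :: "complex set"
  hadd :: "complex \<Rightarrow> complex \<Rightarrow> complex set"
  hneg :: "complex \<Rightarrow> complex"

definition ph :: "complex \<Rightarrow> complex" where
  "ph z = (if z = 0 then 0 else z / complex_of_real (cmod z))"

text \<open>Shortest closed arc on the unit circle joining a and b (for a, b of modulus 1, b not -a).\<close>
definition unit_arc :: "complex \<Rightarrow> complex \<Rightarrow> complex set" where
  "unit_arc a b = {ph ((1 - complex_of_real t) * a + complex_of_real t * b) | t. t \<in> {0..1}}"

definition Krasner :: hyperfield where
  "Krasner = \<lparr> hcarrier = {0, 1},
     hadd = (\<lambda>a b. if a = 0 then {b} else if b = 0 then {a} else {0, 1}),
     hneg = (\<lambda>a. a) \<rparr>"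

definition Sign :: hyperfield where
  "Sign = \<lparr> hcarrier = {-1, 0, 1},
     hadd = (\<lambda>a b. if a = 0 then {b} else if b = 0 then {a} else if a = b then {a}
                   else {-1, 0, 1}),
     hneg = uminus \<rparr>"

definition Phase :: hyperfield where
  "Phase = \<lparr> hcarrier = {z. cmod z = 1} \<union> {0},
     hadd = (\<lambda>a b. if a = 0 then {b} else if b = 0 then {a} else if a = b then {a}
                   else if b = - a then {z. cmod z = 1} \<union> {0}
                   else unit_arc a b),
     hneg = uminus \<rparr>"

definition Triangle :: hyperfield where
  "Triangle = \<lparr> hcarrier = complex_of_real ` {0..},
     hadd = (\<lambda>a b. complex_of_real ` {\<bar>Re a - Re b\<bar> .. Re a + Re b}),
     hneg = (\<lambda>a. a) \<rparr>"

definition TropTriangle :: hyperfield where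
  "TropTriangle = \<lparr> hcarrier = complex_of_real ` {0..},
     hadd = (\<lambda>a b. if a \<noteq> b then {complex_of_real (max (Re a) (Re b))}
                   else complex_of_real ` {0 .. Re a}),
     hneg = (\<lambda>a. a) \<rparr>"

definition TropReal :: hyperfield where
  "TropReal = \<lparr> hcarrier = \<real>,
     hadd = (\<lambda>a b. if cmod a > cmod b \<or> a = b then {a}
                   else if cmod b > cmod a then {b}
                   else complex_of_real ` {- cmod a .. cmod a}),
     hneg = uminus \<rparr>"

definition TropComplex :: hyperfield where
  "TropComplex = \<lparr> hcarrier = UNIV,
     hadd = (\<lambda>a b. if cmod a > cmod b then {a}
                   else if cmod b > cmod a then {b}
                   else if b = - a then cball 0 (cmod a)
                   else {complex_of_real (cmod a) * ph ((1 - complex_of_real t) * a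
                           + complex_of_real t * b) | t. t \<in> {0..1}}),
     hneg = uminus \<rparr>"

definition htop :: "hyperfield \<Rightarrow> complex topology" where
  "htop F = subtopology euclidean (hcarrier F)"

definition toK :: "complex \<Rightarrow> complex" where
  "toK z = (if z = 0 then 0 else 1)"

text \<open>E = {1..n}; elements of E^r are lists of length r with entries in E.\<close>
definition tuples :: "nat \<Rightarrow> nat \<Rightarrow> nat list set" where
  "tuples r n = {xs. length xs = r \<and> set xs \<subseteq> {1..n}}"

fun hsum :: "hyperfield \<Rightarrow> complex list \<Rightarrow> complex set" where
  "hsum F [] = {0}"
| "hsum F (x # xs) = (\<Union>y \<in> hsum F xs. hadd F x y)"

definition alternating :: "hyperfield \<Rightarrow> nat \<Rightarrow> nat \<Rightarrow> (nat list \<Rightarrow> complex) \<Rightarrow> bool" where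
  "alternating F r n \<phi> \<longleftrightarrow>
     (\<forall>xs \<in> tuples r n. \<not> distinct xs \<longrightarrow> \<phi> xs = 0) \<and>
     (\<forall>xs \<in> tuples r n. \<forall>k l. k < l \<and> l < r \<longrightarrow>
         \<phi> (xs[k := xs ! l, l := xs ! k]) = hneg F (\<phi> xs))"

definition del_at :: "nat \<Rightarrow> 'a list \<Rightarrow> 'a list" where
  "del_at k xs = take k xs @ drop (Suc k) xs"

text \<open>The Grassmann--Pluecker relation for (i_1..i_{r+1}) and (j_1..j_{r-1});
 (-1)^k \<odot> x is the k-fold hyperinverse of x (k counted from 1).\<close>
definition GP_rel :: "hyperfield \<Rightarrow> nat \<Rightarrow> (nat list \<Rightarrow> complex) \<Rightarrow> nat list \<Rightarrow> nat list \<Rightarrow> bool" where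
  "GP_rel F r \<phi> is js \<longleftrightarrow>
     0 \<in> hsum F (map (\<lambda>k. (hneg F ^^ (Suc k)) (\<phi> (del_at k is) * \<phi> ((is ! k) # js))) [0..<Suc r])"

definition matroid_bases :: "nat set \<Rightarrow> nat set set \<Rightarrow> bool" where
  "matroid_bases E B \<longleftrightarrow> B \<noteq> {} \<and> (\<forall>X \<in> B. X \<subseteq> E) \<and>
     (\<forall>B1 \<in> B. \<forall>B2 \<in> B. \<forall>x \<in> B1 - B2. \<exists>y \<in> B2 - B1. insert y (B1 - {x}) \<in> B)"

definition strong_GP :: "hyperfield \<Rightarrow> nat \<Rightarrow> nat \<Rightarrow> (nat list \<Rightarrow> complex) \<Rightarrow> bool" where
  "strong_GP F r n \<phi> \<longleftrightarrow>
     \<phi> \<in> tuples r n \<rightarrow>\<^sub>E hcarrier F \<and> (\<exists>xs \<in> tuples r n. \<phi> xs \<noteq> 0) \<and> alternating F r n \<phi> \<and>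
     (\<forall>is \<in> tuples (Suc r) n. \<forall>js \<in> tuples (r - 1) n. GP_rel F r \<phi> is js)"

definition weak_GP :: "hyperfield \<Rightarrow> nat \<Rightarrow> nat \<Rightarrow> (nat list \<Rightarrow> complex) \<Rightarrow> bool" where
  "weak_GP F r n \<phi> \<longleftrightarrow>
     \<phi> \<in> tuples r n \<rightarrow>\<^sub>E hcarrier F \<and> (\<exists>xs \<in> tuples r n. \<phi> xs \<noteq> 0) \<and> alternating F r n \<phi> \<and>
     matroid_bases {1..n} {set xs | xs. xs \<in> tuples r n \<and> \<phi> xs \<noteq> 0} \<and>
     (\<forall>is \<in> tuples (Suc r) n. \<forall>js \<in> tuples (r - 1) n.
        card (set is - set js) = 3 \<longrightarrow> GP_rel F r \<phi> is js)"

definition orbit :: "hyperfield \<Rightarrow> nat \<Rightarrow> nat \<Rightarrow> (nat list \<Rightarrow> complex) \<Rightarrow> (nat list \<Rightarrow> complex) set" where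
  "orbit F r n \<phi> = {restrict (\<lambda>t. \<alpha> * \<phi> t) (tuples r n) | \<alpha>. \<alpha> \<in> hcarrier F - {0}}"

definition Gr :: "(hyperfield \<Rightarrow> nat \<Rightarrow> nat \<Rightarrow> (nat list \<Rightarrow> complex) \<Rightarrow> bool)
    \<Rightarrow> hyperfield \<Rightarrow> nat \<Rightarrow> nat \<Rightarrow> (nat list \<Rightarrow> complex) set set" where
  "Gr P F r n = {orbit F r n \<phi> | \<phi>. P F r n \<phi>}"

definition quotient_topology :: "'a topology \<Rightarrow> ('a \<Rightarrow> 'b) \<Rightarrow> 'b topology" where
  "quotient_topology X q =
     topology (\<lambda>U. U \<subseteq> q ` topspace X \<and> openin X {x \<in> topspace X. q x \<in> U})"

definition fun_space_top :: "hyperfield \<Rightarrow> nat \<Rightarrow> nat \<Rightarrow> (nat list \<Rightarrow> complex) topology" where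
  "fun_space_top F r n =
     subtopology (product_topology (\<lambda>_. htop F) (tuples r n))
       (topspace (product_topology (\<lambda>_. htop F) (tuples r n)) - {restrict (\<lambda>_. 0) (tuples r n)})"

definition proj_top :: "hyperfield \<Rightarrow> nat \<Rightarrow> nat \<Rightarrow> (nat list \<Rightarrow> complex) set topology" where
  "proj_top F r n = quotient_topology (fun_space_top F r n) (orbit F r n)"

text \<open>Realization space of M in Gr^P(r, F'^n) over F along the morphism f : F \<rightarrow> F'.\<close>
definition Real_set :: "(hyperfield \<Rightarrow> nat \<Rightarrow> nat \<Rightarrow> (nat list \<Rightarrow> complex) \<Rightarrow> bool)
    \<Rightarrow> hyperfield \<Rightarrow> hyperfield \<Rightarrow> (complex \<Rightarrow> complex) \<Rightarrow> nat \<Rightarrow> nat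
    \<Rightarrow> (nat list \<Rightarrow> complex) set \<Rightarrow> (nat list \<Rightarrow> complex) set set" where
  "Real_set P F F' f r n M =
     {C \<in> Gr P F r n. \<exists>\<phi> \<in> C. orbit F' r n (restrict (f \<circ> \<phi>) (tuples r n)) = M}"

definition Real_top :: "(hyperfield \<Rightarrow> nat \<Rightarrow> nat \<Rightarrow> (nat list \<Rightarrow> complex) \<Rightarrow> bool)
    \<Rightarrow> hyperfield \<Rightarrow> hyperfield \<Rightarrow> (complex \<Rightarrow> complex) \<Rightarrow> nat \<Rightarrow> nat
    \<Rightarrow> (nat list \<Rightarrow> complex) set \<Rightarrow> (nat list \<Rightarrow> complex) set topology" where
  "Real_top P F F' f r n M = subtopology (proj_top F r n) (Real_set P F F' f r n M)"

end

theory Submission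
  imports Defs
begin

text \<open>For \<open>0 \<le> t \<le> 1\<close> the radial power \<open>z \<mapsto> ph z \<cdot> \<bar>z\<bar>\<^sup>t\<close> is multiplicative, keeps
phases, and is an endomorphism of each of the hyperfields \<open>\<triangle>\<close>, \<open>T\<triangle>\<close>, \<open>T\<real>\<close> and \<open>T\<complex>\<close>
(for \<open>\<triangle>\<close> this is the subadditivity of \<open>x \<mapsto> x\<^sup>t\<close>). Applied entrywise it therefore maps
Grassmann--Pluecker functions to Grassmann--Pluecker functions with the same image in
K, S or \<open>\<Phi>\<close>, and is compatible with rescaling. Letting the exponent run from 1 to 0
thus deforms every point of a realization space of \<open>M\<close> into the class of \<open>ph \<circ> \<phi>\<close>,
which depends only on \<open>M\<close>. All realizations have the support of \<open>M\<close>, so the coordinates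
that move stay away from 0, where the radial power is jointly continuous; as the projection
to the Grassmannian is open, the deformation is continuous on the quotient.
Nonemptiness holds because K, S and \<open>\<Phi>\<close> embed into \<open>\<triangle>\<close> and \<open>T\<triangle>\<close>, \<open>T\<real>\<close> and
\<open>T\<complex>\<close> respectively, so that \<open>M\<close> realizes itself.\<close>

section \<open>Phases and radial powers\<close>

lemma ph_0 [simp]: "ph 0 = 0"
  by (simp add: ph_def)

lemma ph_eq_0_iff [simp]: "ph z = 0 \<longleftrightarrow> z = 0"
  by (simp add: ph_def)

lemma norm_ph: "z \<noteq> 0 \<Longrightarrow> cmod (ph z) = 1"
  by (simp add: ph_def norm_divide)

lemma norm_mult_ph: "complex_of_real (cmod z) * ph z = z"
  by (simp add: ph_def)

lemma ph_mult: "ph (a * b) = ph a * ph b"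
  by (simp add: ph_def norm_mult)

lemma ph_of_real_pos_mult: "c > 0 \<Longrightarrow> ph (complex_of_real c * w) = ph w"
  by (simp add: ph_def norm_mult)

lemma ph_ph [simp]: "ph (ph z) = ph z"
  by (cases "z = 0") (simp_all add: ph_def norm_divide)

lemma ph_minus: "ph (- z) = - ph z"
  by (simp add: ph_def)

definition radial_pow :: "real \<Rightarrow> complex \<Rightarrow> complex" where
  "radial_pow t z = ph z * complex_of_real (cmod z powr t)"

lemma radial_pow_0 [simp]: "radial_pow t 0 = 0"
  by (simp add: radial_pow_def)

lemma radial_pow_eq_0_iff [simp]: "radial_pow t z = 0 \<longleftrightarrow> z = 0"
  by (simp add: radial_pow_def)

lemma norm_radial_pow: "cmod (radial_pow t z) = cmod z powr t"
  by (cases "z = 0") (simp_all add: radial_pow_def norm_mult norm_ph)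

lemma ph_radial_pow [simp]: "ph (radial_pow t z) = ph z"
proof (cases "z = 0")
  case False
  then have "radial_pow t z = complex_of_real (cmod z powr t) * ph z"
    by (simp add: radial_pow_def mult.commute)
  then show ?thesis
    using False by (simp add: ph_of_real_pos_mult)
qed simp

lemma radial_pow_exp_0: "radial_pow 0 z = ph z"
  by (simp add: radial_pow_def)

lemma radial_pow_one [simp]: "radial_pow t 1 = 1"
  by (simp add: radial_pow_def ph_def)

lemma radial_pow_mult: "radial_pow t (a * b) = radial_pow t a * radial_pow t b"
  by (simp add: radial_pow_def ph_mult norm_mult powr_mult)

lemma radial_pow_minus: "radial_pow t (- z) = - radial_pow t z"
  by (simp add: radial_pow_def ph_minus)

lemma radial_pow_of_real: "radial_pow t (complex_of_real x) = complex_of_real (sgn x * \<bar>x\<bar> powr t)"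
  by (auto simp: radial_pow_def ph_def sgn_if)

lemma radial_pow_of_nonneg: "x \<ge> 0 \<Longrightarrow> radial_pow t (complex_of_real x) = complex_of_real (x powr t)"
  by (auto simp: radial_pow_def ph_def)

lemma radial_pow_Reals: "a \<in> \<real> \<Longrightarrow> radial_pow t a \<in> \<real>"
  by (auto simp: radial_pow_of_real elim!: Reals_cases)

lemma radial_pow_mono: "0 \<le> t \<Longrightarrow> cmod a \<le> cmod b \<Longrightarrow> cmod (radial_pow t a) \<le> cmod (radial_pow t b)"
  by (simp add: norm_radial_pow powr_mono2)

lemma radial_pow_ph_mult:
  assumes "c > 0"
  shows "radial_pow t (complex_of_real c * ph v) = complex_of_real (c powr t) * ph v"
proof (cases "v = 0")
  case False
  have "cmod (complex_of_real c * ph v) = c"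
    using assms False by (simp add: norm_mult norm_ph)
  moreover have "ph (complex_of_real c * ph v) = ph v"
    using assms by (simp add: ph_of_real_pos_mult)
  ultimately show ?thesis
    by (simp only: radial_pow_def mult.commute)
qed simp

lemma powr_add_le:
  fixes x y t :: real
  assumes "0 \<le> x" "0 \<le> y" "0 \<le> t" "t \<le> 1"
  shows "(x + y) powr t \<le> x powr t + y powr t"
proof (cases "x = 0 \<or> y = 0 \<or> t = 0")
  case False
  then have pos: "x > 0" "y > 0"
    using assms by auto
  have "(x + y) powr t = (x + y) powr (t - 1) * (x + y)"
    using pos by (simp add: powr_diff)
  also have "\<dots> = x * (x + y) powr (t - 1) + y * (x + y) powr (t - 1)"
    by (simp add: algebra_simps)
  also have "\<dots> \<le> x * x powr (t - 1) + y * y powr (t - 1)"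
    using pos assms by (intro add_mono mult_left_mono powr_mono2') auto
  also have "\<dots> = x powr t + y powr t"
    using pos by (simp add: powr_diff)
  finally show ?thesis .
qed (use assms in auto)

lemma powr_abs_diff_le:
  fixes x y z t :: real
  assumes "0 \<le> x" "0 \<le> y" "0 \<le> t" "t \<le> 1" "\<bar>x - y\<bar> \<le> z"
  shows "\<bar>x powr t - y powr t\<bar> \<le> z powr t"
proof -
  have "x powr t \<le> z powr t + y powr t" if "0 \<le> x" "0 \<le> y" "\<bar>x - y\<bar> \<le> z" for x y
  proof -
    have "x powr t \<le> (z + y) powr t"
      using that assms by (intro powr_mono2) auto
    also have "\<dots> \<le> z powr t + y powr t"
      using that assms by (intro powr_add_le) auto
    finally show ?thesis .
  qed
  from this[of x y] this[of y x] show ?thesis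
    using assms by (auto simp: abs_minus_commute)
qed

lemma continuous_on_radial_pow:
  "continuous_on (UNIV \<times> (UNIV - {0})) (\<lambda>p. radial_pow (fst p) (snd p))"
proof -
  have "continuous_on (UNIV \<times> (UNIV - {0}))
      (\<lambda>p::real \<times> complex. snd p / complex_of_real (cmod (snd p)) * complex_of_real (cmod (snd p) powr fst p))"
    by (intro continuous_intros) auto
  then show ?thesis
    by (rule continuous_on_cong[THEN iffD1, rotated 2]) (auto simp: radial_pow_def ph_def)
qed

locale closed_hyperfield =
  fixes F :: hyperfield
  assumes zero_mem: "0 \<in> hcarrier F" and one_mem: "1 \<in> hcarrier F"
    and mult_mem: "a \<in> hcarrier F \<Longrightarrow> b \<in> hcarrier F \<Longrightarrow> a * b \<in> hcarrier F"
    and inverse_mem: "a \<in> hcarrier F \<Longrightarrow> inverse a \<in> hcarrier F"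
    and hneg_mem: "a \<in> hcarrier F \<Longrightarrow> hneg F a \<in> hcarrier F"
    and hadd_subset: "a \<in> hcarrier F \<Longrightarrow> b \<in> hcarrier F \<Longrightarrow> hadd F a b \<subseteq> hcarrier F"

definition hmorphism :: "hyperfield \<Rightarrow> hyperfield \<Rightarrow> (complex \<Rightarrow> complex) \<Rightarrow> bool" where
  "hmorphism F F' g \<longleftrightarrow> g ` hcarrier F \<subseteq> hcarrier F' \<and> g 0 = 0 \<and> g 1 = 1 \<and>
     (\<forall>a \<in> hcarrier F. \<forall>b \<in> hcarrier F. g (a * b) = g a * g b) \<and>
     (\<forall>a \<in> hcarrier F. g (hneg F a) = hneg F' (g a)) \<and>
     (\<forall>a \<in> hcarrier F. \<forall>b \<in> hcarrier F. g ` hadd F a b \<subseteq> hadd F' (g a) (g b))"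

lemma hmorphism_idI:
  assumes "hcarrier F \<subseteq> hcarrier F'" "\<And>a. a \<in> hcarrier F \<Longrightarrow> hneg F' a = hneg F a"
    and "\<And>a b. a \<in> hcarrier F \<Longrightarrow> b \<in> hcarrier F \<Longrightarrow> hadd F a b \<subseteq> hadd F' a b"
  shows "hmorphism F F' id"
  using assms by (simp add: hmorphism_def)

lemma tuples_swap:
  assumes "xs \<in> tuples r n" "k < r" "l < r"
  shows "xs[k := xs ! l, l := xs ! k] \<in> tuples r n"
  using assms by (auto simp: tuples_def dest!: subsetD[OF set_update_subset_insert] intro!: nth_mem)

lemma tuples_del_at:
  assumes "is \<in> tuples (Suc r) n" "k < Suc r"
  shows "del_at k is \<in> tuples r n"
  using assms unfolding tuples_def del_at_def by (auto dest: in_set_takeD in_set_dropD)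

lemma tuples_Cons_nth:
  assumes "is \<in> tuples (Suc r) n" "k < Suc r" "js \<in> tuples (r - 1) n" "0 < r"
  shows "(is ! k) # js \<in> tuples r n"
  using assms nth_mem[of k "is"] unfolding tuples_def by fastforce

context closed_hyperfield
begin

lemma hsum_subset: "set xs \<subseteq> hcarrier F \<Longrightarrow> hsum F xs \<subseteq> hcarrier F"
  by (induction xs) (use zero_mem hadd_subset in auto)

lemma funpow_hneg_mem: "a \<in> hcarrier F \<Longrightarrow> (hneg F ^^ k) a \<in> hcarrier F"
  by (induction k) (simp_all add: hneg_mem)

context
  fixes F' g
  assumes g: "hmorphism F F' g"
begin

lemma hmorphism_mem: "a \<in> hcarrier F \<Longrightarrow> g a \<in> hcarrier F'"
  using g by (auto simp: hmorphism_def)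

lemma hmorphism_mult: "a \<in> hcarrier F \<Longrightarrow> b \<in> hcarrier F \<Longrightarrow> g (a * b) = g a * g b"
  using g by (simp add: hmorphism_def)

lemma hmorphism_funpow_hneg: "a \<in> hcarrier F \<Longrightarrow> g ((hneg F ^^ k) a) = (hneg F' ^^ k) (g a)"
  by (induction k) (use g funpow_hneg_mem in \<open>auto simp: hmorphism_def\<close>)

lemma hsum_hmorphism: "set xs \<subseteq> hcarrier F \<Longrightarrow> g ` hsum F xs \<subseteq> hsum F' (map g xs)"
proof (induction xs)
  case Nil
  then show ?case using g by (simp add: hmorphism_def)
next
  case (Cons x xs)
  show ?case
  proof
    fix w assume "w \<in> g ` hsum F (x # xs)"
    then obtain y v where y: "y \<in> hsum F xs" and v: "v \<in> hadd F x y" and w: "w = g v"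
      by auto
    have "y \<in> hcarrier F"
      using y hsum_subset Cons.prems by auto
    then have "g ` hadd F x y \<subseteq> hadd F' (g x) (g y)"
      using g Cons.prems by (simp add: hmorphism_def)
    then have "w \<in> hadd F' (g x) (g y)"
      using v w by blast
    moreover have "g y \<in> hsum F' (map g xs)"
      using Cons y by auto
    ultimately show "w \<in> hsum F' (map g (x # xs))"
      by auto
  qed
qed

lemma GP_rel_hmorphism:
  assumes r: "0 < r" and \<phi>: "\<phi> \<in> tuples r n \<rightarrow>\<^sub>E hcarrier F"
    and "is": "is \<in> tuples (Suc r) n" and js: "js \<in> tuples (r - 1) n"
    and rel: "GP_rel F r \<phi> is js"
  shows "GP_rel F' r (restrict (g \<circ> \<phi>) (tuples r n)) is js"
proof -
  define summand where "summand k = \<phi> (del_at k is) * \<phi> ((is ! k) # js)" for k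
  let ?L = "map (\<lambda>k. (hneg F ^^ Suc k) (summand k)) [0..<Suc r]"
  have summand_mem: "summand k \<in> hcarrier F" if "k < Suc r" for k
    using \<phi> tuples_del_at[OF "is" that] tuples_Cons_nth[OF "is" that js r]
    by (auto simp: summand_def intro!: mult_mem)
  have "g (summand k) = restrict (g \<circ> \<phi>) (tuples r n) (del_at k is) *
      restrict (g \<circ> \<phi>) (tuples r n) ((is ! k) # js)" if "k < Suc r" for k
    using \<phi> tuples_del_at[OF "is" that] tuples_Cons_nth[OF "is" that js r]
    by (auto simp: summand_def intro!: hmorphism_mult)
  then have map_L: "map g ?L = map (\<lambda>k. (hneg F' ^^ Suc k) (restrict (g \<circ> \<phi>) (tuples r n) (del_at k is)
      * restrict (g \<circ> \<phi>) (tuples r n) ((is ! k) # js))) [0..<Suc r]"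
    by (simp add: hmorphism_funpow_hneg summand_mem del: upt_Suc funpow.simps)
  have "set ?L \<subseteq> hcarrier F"
    using summand_mem funpow_hneg_mem by (auto simp del: upt_Suc funpow.simps)
  moreover have "0 \<in> hsum F ?L"
    using rel by (simp add: GP_rel_def summand_def)
  ultimately have "g 0 \<in> hsum F' (map g ?L)"
    using hsum_hmorphism by blast
  moreover have "g 0 = 0"
    using g by (simp add: hmorphism_def)
  ultimately show ?thesis
    unfolding GP_rel_def map_L by simp
qed

lemma alternating_hmorphism:
  assumes \<phi>: "\<phi> \<in> tuples r n \<rightarrow>\<^sub>E hcarrier F" and alt: "alternating F r n \<phi>"
  shows "alternating F' r n (restrict (g \<circ> \<phi>) (tuples r n))"
  unfolding alternating_def
proof (intro conjI ballI allI impI)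
  fix xs assume "xs \<in> tuples r n" "\<not> distinct xs"
  then show "restrict (g \<circ> \<phi>) (tuples r n) xs = 0"
    using alt g by (simp add: alternating_def hmorphism_def)
next
  fix xs k l assume xs: "xs \<in> tuples r n" and kl: "k < l \<and> l < r"
  then show "restrict (g \<circ> \<phi>) (tuples r n) (xs[k := xs ! l, l := xs ! k]) =
      hneg F' (restrict (g \<circ> \<phi>) (tuples r n) xs)"
    using alt g \<phi> tuples_swap[OF xs, of k l] by (auto simp: alternating_def hmorphism_def)
qed

lemma restrict_hmorphism_PiE:
  "\<phi> \<in> tuples r n \<rightarrow>\<^sub>E hcarrier F \<Longrightarrow> restrict (g \<circ> \<phi>) (tuples r n) \<in> tuples r n \<rightarrow>\<^sub>E hcarrier F'"
  using hmorphism_mem by (auto simp: PiE_iff)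

context
  assumes g_eq_0_iff: "\<And>a. a \<in> hcarrier F \<Longrightarrow> g a = 0 \<longleftrightarrow> a = 0"
begin

lemma support_hmorphism:
  "\<phi> \<in> tuples r n \<rightarrow>\<^sub>E hcarrier F \<Longrightarrow> xs \<in> tuples r n \<Longrightarrow>
     restrict (g \<circ> \<phi>) (tuples r n) xs = 0 \<longleftrightarrow> \<phi> xs = 0"
  using g_eq_0_iff by (auto simp: PiE_iff)

lemma strong_GP_hmorphism:
  assumes "0 < r" "strong_GP F r n \<phi>"
  shows "strong_GP F' r n (restrict (g \<circ> \<phi>) (tuples r n))"
proof -
  have "\<phi> \<in> tuples r n \<rightarrow>\<^sub>E hcarrier F"
    using assms by (simp add: strong_GP_def)
  then show ?thesis
    using assms restrict_hmorphism_PiE alternating_hmorphism GP_rel_hmorphism support_hmorphism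
    unfolding strong_GP_def by meson
qed

lemma weak_GP_hmorphism:
  assumes "0 < r" "weak_GP F r n \<phi>"
  shows "weak_GP F' r n (restrict (g \<circ> \<phi>) (tuples r n))"
proof -
  have \<phi>: "\<phi> \<in> tuples r n \<rightarrow>\<^sub>E hcarrier F"
    using assms by (simp add: weak_GP_def)
  then have "{set xs |xs. xs \<in> tuples r n \<and> restrict (g \<circ> \<phi>) (tuples r n) xs \<noteq> 0}
      = {set xs |xs. xs \<in> tuples r n \<and> \<phi> xs \<noteq> 0}"
    using support_hmorphism by blast
  with \<phi> show ?thesis
    using assms restrict_hmorphism_PiE alternating_hmorphism GP_rel_hmorphism support_hmorphism
    unfolding weak_GP_def by (metis (no_types, lifting))
qed

end

end

end

section \<open>Basis exchange over the Krasner hyperfield\<close>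

lemma hsum_Krasner_zeros: "\<forall>z \<in> set zs. z = 0 \<Longrightarrow> hsum Krasner zs = {0}"
  by (induction zs) (auto simp: Krasner_def)

lemma hsum_Krasner_nonzero_summand:
  assumes "0 \<in> hsum Krasner (a # zs)" "a \<noteq> 0"
  shows "\<exists>z \<in> set zs. z \<noteq> 0"
proof (rule ccontr)
  assume "\<not> ?thesis"
  then have "hsum Krasner zs = {0}"
    by (intro hsum_Krasner_zeros) auto
  then have "hsum Krasner (a # zs) = {a}"
    using assms(2) by (simp add: Krasner_def)
  with assms show False
    by (metis singletonD)
qed

lemma funpow_hneg_Krasner [simp]: "(hneg Krasner ^^ k) a = a"
  by (induction k) (simp_all add: Krasner_def)

lemma alternating_Krasner_move_to_front:
  assumes alt: "alternating Krasner r n \<phi>" and xs: "xs \<in> tuples r n" "\<phi> xs \<noteq> 0"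
    and x: "x \<in> set xs"
  obtains js where "x # js \<in> tuples r n" "\<phi> (x # js) \<noteq> 0" "set js = set xs - {x}"
proof -
  obtain i where i: "i < r" "xs ! i = x"
    using x xs(1) by (auto simp: tuples_def in_set_conv_nth)
  define ys where "ys = xs[0 := xs ! i, i := xs ! 0]"
  have ys: "ys \<in> tuples r n"
    unfolding ys_def using tuples_swap[OF xs(1) _ i(1)] i(1) by simp
  have "\<phi> ys = \<phi> xs"
    using alt xs(1) i(1) by (cases "i = 0") (auto simp: ys_def alternating_def Krasner_def)
  then have "\<phi> ys \<noteq> 0" "distinct ys"
    using alt ys xs(2) by (auto simp: alternating_def)
  moreover have "ys = x # tl ys"
  proof -
    have "length ys = r" "ys ! 0 = x"
      using i xs(1) by (auto simp: ys_def tuples_def nth_list_update)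
    then show ?thesis
      using i(1) by (metis hd_conv_nth less_zeroE list.collapse list.size(3))
  qed
  moreover have "set ys = set xs"
    using i xs(1) set_swap[of 0 xs i] by (auto simp: ys_def tuples_def)
  ultimately show thesis
    using ys that[of "tl ys"] by (metis Diff_insert_absorb distinct.simps(2) list.simps(15))
qed

text \<open>In the relation for \<open>(x, xs)\<close> and \<open>js\<close> the summand of \<open>x\<close> is nonzero, and a Krasner sum
with a single nonzero summand does not contain 0.\<close>

lemma strong_GP_Krasner_exchange:
  assumes r: "0 < r" and \<phi>: "strong_GP Krasner r n \<phi>"
    and x: "x # js \<in> tuples r n" "\<phi> (x # js) \<noteq> 0" and xs: "xs \<in> tuples r n" "\<phi> xs \<noteq> 0"
  obtains y where "y \<in> set xs" "y # js \<in> tuples r n" "\<phi> (y # js) \<noteq> 0"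
proof -
  have "is": "x # xs \<in> tuples (Suc r) n" and js: "js \<in> tuples (r - 1) n"
    using x(1) xs(1) by (auto simp: tuples_def)
  define summand where "summand = (\<lambda>k. \<phi> (del_at k (x # xs)) * \<phi> ((x # xs) ! k # js))"
  have "GP_rel Krasner r \<phi> (x # xs) js"
    using \<phi> "is" js by (simp add: strong_GP_def)
  then have "0 \<in> hsum Krasner (map summand [0..<Suc r])"
    by (simp add: GP_rel_def summand_def del: upt_Suc funpow.simps)
  then have "0 \<in> hsum Krasner (summand 0 # map summand [1..<Suc r])"
    by (simp add: upt_conv_Cons del: upt_Suc)
  moreover have "summand 0 \<noteq> 0"
    using x xs by (simp add: summand_def del_at_def)
  ultimately have "\<exists>z \<in> set (map summand [1..<Suc r]). z \<noteq> 0"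
    by (rule hsum_Krasner_nonzero_summand)
  then obtain k where k: "1 \<le> k" "k < Suc r" "summand k \<noteq> 0"
    by (auto simp del: upt_Suc)
  show thesis
  proof (rule that)
    show "xs ! (k - 1) \<in> set xs"
      using k xs(1) by (auto simp: tuples_def)
    show "xs ! (k - 1) # js \<in> tuples r n" "\<phi> (xs ! (k - 1) # js) \<noteq> 0"
      using k tuples_Cons_nth[OF "is" k(2) js r] by (auto simp: summand_def)
  qed
qed

lemma strong_GP_Krasner_imp_weak_GP:
  assumes r: "0 < r" and \<phi>: "strong_GP Krasner r n \<phi>"
  shows "weak_GP Krasner r n \<phi>"
proof -
  have alt: "alternating Krasner r n \<phi>"
    using \<phi> by (simp add: strong_GP_def)
  let ?B = "{set xs |xs. xs \<in> tuples r n \<and> \<phi> xs \<noteq> 0}"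
  have "\<exists>y \<in> B2 - B1. insert y (B1 - {x}) \<in> ?B"
    if B1: "B1 \<in> ?B" and B2: "B2 \<in> ?B" and x: "x \<in> B1 - B2" for B1 B2 x
  proof -
    obtain xs1 xs2 where xs1: "B1 = set xs1" "xs1 \<in> tuples r n" "\<phi> xs1 \<noteq> 0"
      and xs2: "B2 = set xs2" "xs2 \<in> tuples r n" "\<phi> xs2 \<noteq> 0"
      using B1 B2 by blast
    obtain js where js: "x # js \<in> tuples r n" "\<phi> (x # js) \<noteq> 0" "set js = B1 - {x}"
      using alternating_Krasner_move_to_front[OF alt xs1(2,3)] x xs1(1) by blast
    obtain y where y: "y \<in> B2" "y # js \<in> tuples r n" "\<phi> (y # js) \<noteq> 0"
      using strong_GP_Krasner_exchange[OF r \<phi> js(1,2) xs2(2,3)] xs2(1) by blast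
    have "distinct (y # js)"
      using alt y(2,3) by (auto simp: alternating_def)
    then have "y \<in> B2 - B1"
      using y(1) js(3) x by auto
    moreover have "insert y (B1 - {x}) = set (y # js)"
      using js(3) by simp
    ultimately show ?thesis
      using y by blast
  qed
  moreover have "?B \<noteq> {}" "\<forall>X \<in> ?B. X \<subseteq> {1..n}"
    using \<phi> by (auto simp: strong_GP_def tuples_def)
  ultimately show ?thesis
    using \<phi> by (auto simp: strong_GP_def weak_GP_def matroid_bases_def)
qed

lemma closed_hyperfield_Krasner: "closed_hyperfield Krasner"
  by unfold_locales (auto simp: Krasner_def)

lemma closed_hyperfield_Sign: "closed_hyperfield Sign"
  by unfold_locales (auto simp: Sign_def)

lemma closed_hyperfield_Phase: "closed_hyperfield Phase"
  by unfold_locales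
    (auto simp: Phase_def unit_arc_def norm_mult norm_inverse norm_ph)

lemma closed_hyperfield_nonneg_reals:
  assumes "hcarrier F = complex_of_real ` {0..}"
    and "\<And>a. a \<in> hcarrier F \<Longrightarrow> hneg F a \<in> hcarrier F"
    and "\<And>a b. a \<in> hcarrier F \<Longrightarrow> b \<in> hcarrier F \<Longrightarrow> hadd F a b \<subseteq> hcarrier F"
  shows "closed_hyperfield F"
proof unfold_locales
  show "0 \<in> hcarrier F" "1 \<in> hcarrier F"
    unfolding assms(1) by (force intro: image_eqI[of _ _ 0], force intro: image_eqI[of _ _ 1])
  fix a b assume "a \<in> hcarrier F" "b \<in> hcarrier F"
  then obtain x y where "a = complex_of_real x" "0 \<le> x" "b = complex_of_real y" "0 \<le> y"
    unfolding assms(1) by auto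
  then show "a * b \<in> hcarrier F" "inverse a \<in> hcarrier F"
    unfolding assms(1) by (force intro: image_eqI[of _ _ "x * y"],
        force intro: image_eqI[of _ _ "inverse x"] simp: of_real_inverse)
qed (use assms in auto)

lemma closed_hyperfield_Triangle: "closed_hyperfield Triangle"
  by (rule closed_hyperfield_nonneg_reals) (auto simp: Triangle_def)

lemma closed_hyperfield_TropTriangle: "closed_hyperfield TropTriangle"
  by (rule closed_hyperfield_nonneg_reals) (auto simp: TropTriangle_def)

lemma closed_hyperfield_TropReal: "closed_hyperfield TropReal"
  by unfold_locales (auto simp: TropReal_def)

lemma closed_hyperfield_TropComplex: "closed_hyperfield TropComplex"
  by unfold_locales (simp_all add: TropComplex_def)

lemma hmorphism_radial_powI:
  assumes "\<And>a. a \<in> hcarrier F \<Longrightarrow> radial_pow t a \<in> hcarrier F"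
    and "\<And>a. a \<in> hcarrier F \<Longrightarrow> radial_pow t (hneg F a) = hneg F (radial_pow t a)"
    and "\<And>a b. a \<in> hcarrier F \<Longrightarrow> b \<in> hcarrier F \<Longrightarrow>
           radial_pow t ` hadd F a b \<subseteq> hadd F (radial_pow t a) (radial_pow t b)"
  shows "hmorphism F F (radial_pow t)"
  using assms by (auto simp: hmorphism_def radial_pow_mult)

lemma nonneg_reals_cases:
  assumes "a \<in> complex_of_real ` {0..}"
  obtains x where "a = complex_of_real x" "0 \<le> x"
  using assms by auto

lemma hmorphism_radial_pow_Triangle:
  assumes t: "0 \<le> t" "t \<le> 1"
  shows "hmorphism Triangle Triangle (radial_pow t)"
proof (rule hmorphism_radial_powI)
  fix a b assume "a \<in> hcarrier Triangle" "b \<in> hcarrier Triangle"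
  then obtain x y where a: "a = complex_of_real x" "0 \<le> x" and b: "b = complex_of_real y" "0 \<le> y"
    by (auto simp: Triangle_def elim!: nonneg_reals_cases)
  show "radial_pow t ` hadd Triangle a b \<subseteq> hadd Triangle (radial_pow t a) (radial_pow t b)"
  proof
    fix w assume "w \<in> radial_pow t ` hadd Triangle a b"
    then obtain z where z: "\<bar>x - y\<bar> \<le> z" "z \<le> x + y" and w: "w = radial_pow t (complex_of_real z)"
      using a b by (auto simp: Triangle_def)
    have "z powr t \<le> (x + y) powr t"
      using z t by (intro powr_mono2) auto
    also have "\<dots> \<le> x powr t + y powr t"
      using a b t by (intro powr_add_le) auto
    finally have "z powr t \<le> x powr t + y powr t" .
    moreover have "\<bar>x powr t - y powr t\<bar> \<le> z powr t"
      using a b t z by (intro powr_abs_diff_le) auto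
    ultimately show "w \<in> hadd Triangle (radial_pow t a) (radial_pow t b)"
      using a b z w by (auto simp: Triangle_def radial_pow_of_nonneg)
  qed
qed (auto simp: Triangle_def radial_pow_of_nonneg)

lemma max_mem_hadd_TropTriangle:
  "0 \<le> u \<Longrightarrow> complex_of_real (max u v) \<in> hadd TropTriangle (complex_of_real u) (complex_of_real v)"
  by (auto simp: TropTriangle_def)

lemma hmorphism_radial_pow_TropTriangle:
  assumes t: "0 \<le> t" "t \<le> 1"
  shows "hmorphism TropTriangle TropTriangle (radial_pow t)"
proof (rule hmorphism_radial_powI)
  fix a b assume "a \<in> hcarrier TropTriangle" "b \<in> hcarrier TropTriangle"
  then obtain x y where a: "a = complex_of_real x" "0 \<le> x" and b: "b = complex_of_real y" "0 \<le> y"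
    by (auto simp: TropTriangle_def elim!: nonneg_reals_cases)
  show "radial_pow t ` hadd TropTriangle a b \<subseteq> hadd TropTriangle (radial_pow t a) (radial_pow t b)"
  proof (cases "x = y")
    case True
    have "z powr t \<le> x powr t" if "0 \<le> z" "z \<le> x" for z
      using that t by (intro powr_mono2) auto
    then show ?thesis
      using True a b by (auto simp: TropTriangle_def radial_pow_of_nonneg)
  next
    case False
    have "max x y powr t = max (x powr t) (y powr t)"
      using a b t powr_mono2[of t x y] powr_mono2[of t y x] by (auto simp: max_def)
    then show ?thesis
      using False a b max_mem_hadd_TropTriangle[of "x powr t" "y powr t"]
      by (auto simp: TropTriangle_def radial_pow_of_nonneg)
  qed
qed (auto simp: TropTriangle_def radial_pow_of_nonneg)

lemma mem_hadd_TropReal_left: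
  assumes "a \<in> \<real>" "cmod b \<le> cmod a"
  shows "a \<in> hadd TropReal a b"
  using assms by (auto simp: TropReal_def elim!: Reals_cases intro!: image_eqI[OF refl])

lemma hadd_TropReal_commute: "hadd TropReal a b = hadd TropReal b a"
  by (auto simp: TropReal_def)

lemma hadd_TropReal_minus:
  "a \<noteq> 0 \<Longrightarrow> hadd TropReal a (- a) = complex_of_real ` {- cmod a .. cmod a}"
  by (simp add: TropReal_def)

lemma hmorphism_radial_pow_TropReal:
  assumes t: "0 \<le> t"
  shows "hmorphism TropReal TropReal (radial_pow t)"
proof (rule hmorphism_radial_powI)
  fix a b assume "a \<in> hcarrier TropReal" "b \<in> hcarrier TropReal"
  then have ab: "a \<in> \<real>" "b \<in> \<real>"
    by (simp_all add: TropReal_def)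
  then have ab': "radial_pow t a \<in> \<real>" "radial_pow t b \<in> \<real>"
    by (simp_all add: radial_pow_Reals)
  show "radial_pow t ` hadd TropReal a b \<subseteq> hadd TropReal (radial_pow t a) (radial_pow t b)"
  proof (cases "cmod a = cmod b \<and> a \<noteq> b")
    case True
    then have b: "b = - a" and a: "a \<noteq> 0"
      using ab by (auto elim!: Reals_cases simp: abs_if split: if_splits)
    have "radial_pow t z \<in> complex_of_real ` {- cmod (radial_pow t a) .. cmod (radial_pow t a)}"
      if "z \<in> complex_of_real ` {- cmod a .. cmod a}" for z
    proof -
      have "cmod (radial_pow t z) \<le> cmod (radial_pow t a)"
        using that t by (intro radial_pow_mono) auto
      moreover have "radial_pow t z \<in> \<real>"
        using that by (auto intro: radial_pow_Reals)
      ultimately show ?thesis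
        by (auto elim!: Reals_cases simp: abs_le_iff intro!: image_eqI[OF refl])
    qed
    then show ?thesis
      using a b by (simp add: hadd_TropReal_minus radial_pow_minus image_subset_iff)
  next
    case False
    then consider "cmod b < cmod a" | "cmod a < cmod b" | "a = b"
      by fastforce
    then show ?thesis
    proof cases
      case 1
      then have "hadd TropReal a b = {a}"
        by (simp add: TropReal_def)
      then show ?thesis
        using 1 ab' t by (simp add: mem_hadd_TropReal_left radial_pow_mono)
    next
      case 2
      then have "hadd TropReal a b = {b}"
        by (simp add: TropReal_def)
      then show ?thesis
        using 2 ab' t
        by (simp add: mem_hadd_TropReal_left radial_pow_mono hadd_TropReal_commute[of "radial_pow t a"])
    next
      case 3
      then show ?thesis
        by (simp add: TropReal_def)
    qed
  qed
qed (auto simp: TropReal_def radial_pow_Reals radial_pow_minus)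

lemma radial_pow_eq_scale:
  "radial_pow t z = complex_of_real (cmod z powr t / cmod z) * z"
  by (cases "z = 0") (auto simp: radial_pow_def ph_def field_simps)

lemma hadd_TropComplex_arc:
  "cmod a = cmod b \<Longrightarrow> b \<noteq> - a \<Longrightarrow> hadd TropComplex a b =
     {complex_of_real (cmod a) * ph ((1 - complex_of_real s) * a + complex_of_real s * b) | s. s \<in> {0..1}}"
  by (simp add: TropComplex_def)

lemma mem_hadd_TropComplex_left:
  assumes "cmod b \<le> cmod a"
  shows "a \<in> hadd TropComplex a b"
  using assms by (auto simp: TropComplex_def norm_mult_ph intro!: exI[of _ "0::real"])

lemma mem_hadd_TropComplex_right:
  assumes "cmod a \<le> cmod b"
  shows "b \<in> hadd TropComplex a b"
  using assms by (auto simp: TropComplex_def norm_mult_ph intro!: exI[of _ "1::real"])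

lemma radial_pow_arc:
  assumes "cmod a = cmod b" "a \<noteq> 0"
  shows "radial_pow t (complex_of_real (cmod a) * ph ((1 - complex_of_real s) * a + complex_of_real s * b))
    = complex_of_real (cmod (radial_pow t a)) *
        ph ((1 - complex_of_real s) * radial_pow t a + complex_of_real s * radial_pow t b)"
proof -
  define c where "c = cmod a powr t / cmod a"
  have "cmod a > 0"
    using assms(2) by simp
  then have "c > 0"
    by (simp add: c_def)
  have "radial_pow t a = complex_of_real c * a" "radial_pow t b = complex_of_real c * b"
    by (simp_all add: radial_pow_eq_scale c_def assms(1))
  then have "(1 - complex_of_real s) * radial_pow t a + complex_of_real s * radial_pow t b
      = complex_of_real c * ((1 - complex_of_real s) * a + complex_of_real s * b)"
    by (simp add: algebra_simps)
  then show ?thesis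
    using \<open>cmod a > 0\<close> \<open>c > 0\<close>
    by (simp add: radial_pow_ph_mult ph_of_real_pos_mult norm_radial_pow)
qed

lemma hmorphism_radial_pow_TropComplex:
  assumes t: "0 \<le> t"
  shows "hmorphism TropComplex TropComplex (radial_pow t)"
proof (rule hmorphism_radial_powI)
  fix a b
  show "radial_pow t ` hadd TropComplex a b \<subseteq> hadd TropComplex (radial_pow t a) (radial_pow t b)"
  proof (cases "cmod a = cmod b")
    case False
    then consider "cmod b < cmod a" | "cmod a < cmod b"
      by linarith
    then show ?thesis
    proof cases
      case 1
      then have "hadd TropComplex a b = {a}"
        by (simp add: TropComplex_def)
      then show ?thesis
        using 1 t by (simp add: mem_hadd_TropComplex_left radial_pow_mono)
    next
      case 2
      then have "hadd TropComplex a b = {b}"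
        by (simp add: TropComplex_def)
      then show ?thesis
        using 2 t by (simp add: mem_hadd_TropComplex_right radial_pow_mono)
    qed
  next
    case eq: True
    have eq': "cmod (radial_pow t a) = cmod (radial_pow t b)"
      using eq by (simp add: norm_radial_pow)
    show ?thesis
    proof (cases "b = - a")
      case True
      have "cmod (radial_pow t z) \<le> cmod (radial_pow t a)" if "cmod z \<le> cmod a" for z
        by (rule radial_pow_mono[OF t that])
      then show ?thesis
        using True by (auto simp: TropComplex_def radial_pow_minus)
    next
      case False
      then have a0: "a \<noteq> 0"
        using eq by auto
      have ne: "radial_pow t b \<noteq> - radial_pow t a"
        using False eq by (metis minus_equation_iff norm_minus_cancel norm_mult_ph ph_minus
            ph_radial_pow radial_pow_minus)
      show ?thesis
        unfolding hadd_TropComplex_arc[OF eq False] hadd_TropComplex_arc[OF eq' ne]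
        using radial_pow_arc[OF eq a0] by auto
    qed
  qed
qed (simp_all add: TropComplex_def radial_pow_minus)

lemma hmorphism_Krasner_Triangle: "hmorphism Krasner Triangle id"
proof (rule hmorphism_idI)
  have "{0, 1} \<subseteq> complex_of_real ` {0..2}" "(1::complex) \<in> complex_of_real ` {1..1}"
    by (auto intro: image_eqI[of _ _ 0] image_eqI[of _ _ 1])
  then show "hadd Krasner a b \<subseteq> hadd Triangle a b"
    if "a \<in> hcarrier Krasner" "b \<in> hcarrier Krasner" for a b
    using that by (auto simp: Krasner_def Triangle_def)
qed (auto simp: Krasner_def Triangle_def intro: image_eqI[of _ _ 0] image_eqI[of _ _ 1])

lemma hmorphism_Krasner_TropTriangle: "hmorphism Krasner TropTriangle id"
proof (rule hmorphism_idI)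
  have "{0, 1} \<subseteq> complex_of_real ` {0..1}"
    by (auto intro: image_eqI[of _ _ 0] image_eqI[of _ _ 1])
  then show "hadd Krasner a b \<subseteq> hadd TropTriangle a b"
    if "a \<in> hcarrier Krasner" "b \<in> hcarrier Krasner" for a b
    using that by (auto simp: Krasner_def TropTriangle_def)
qed (auto simp: Krasner_def TropTriangle_def intro: image_eqI[of _ _ 0] image_eqI[of _ _ 1])

lemma hmorphism_Sign_TropReal: "hmorphism Sign TropReal id"
proof (rule hmorphism_idI)
  have "{-1, 0, 1} \<subseteq> complex_of_real ` {-1..1}"
    by (auto intro: image_eqI[of _ _ 0] image_eqI[of _ _ 1] image_eqI[of _ _ "-1"])
  moreover have "- 1 = complex_of_real x \<longleftrightarrow> x = - 1" for x
    by (metis of_real_eq_iff of_real_minus of_real_1)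
  ultimately show "hadd Sign a b \<subseteq> hadd TropReal a b"
    if "a \<in> hcarrier Sign" "b \<in> hcarrier Sign" for a b
    using that by (auto simp: Sign_def TropReal_def)
qed (auto simp: Sign_def TropReal_def)

lemma hmorphism_Phase_TropComplex: "hmorphism Phase TropComplex id"
proof (rule hmorphism_idI)
  fix a b assume "a \<in> hcarrier Phase" "b \<in> hcarrier Phase"
  then consider "a = 0" | "b = 0" | "cmod a = 1" "cmod b = 1"
    by (auto simp: Phase_def)
  then show "hadd Phase a b \<subseteq> hadd TropComplex a b"
  proof cases
    case 3
    consider "a = b" | "b = - a" | "a \<noteq> b" "b \<noteq> - a"
      by blast
    then show ?thesis
    proof cases
      case 1
      then show ?thesis
        using 3 mem_hadd_TropComplex_left[of b b] by (auto simp: Phase_def)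
    next
      case 2
      then show ?thesis
        using 3 by (auto simp: Phase_def TropComplex_def)
    next
      case 4: 3
      then show ?thesis
        using 3 by (auto simp: Phase_def hadd_TropComplex_arc unit_arc_def)
    qed
  qed (auto simp: Phase_def TropComplex_def)
qed (auto simp: Phase_def TropComplex_def)

section \<open>Orbits and the projective topology\<close>

lemma istopology_quotient:
  "istopology (\<lambda>U. U \<subseteq> q ` topspace X \<and> openin X {x \<in> topspace X. q x \<in> U})"
proof -
  have "{x \<in> topspace X. q x \<in> S \<inter> T} = {x \<in> topspace X. q x \<in> S} \<inter> {x \<in> topspace X. q x \<in> T}"
    "{x \<in> topspace X. q x \<in> \<Union>K} = \<Union>((\<lambda>U. {x \<in> topspace X. q x \<in> U}) ` K)" for S T K
    by auto
  then show ?thesis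
    unfolding istopology_def by (auto intro!: openin_Int openin_Union)
qed

lemma openin_quotient_topology:
  "openin (quotient_topology X q) U \<longleftrightarrow> U \<subseteq> q ` topspace X \<and> openin X {x \<in> topspace X. q x \<in> U}"
  by (simp only: quotient_topology_def topology_inverse'[OF istopology_quotient])

lemma topspace_quotient_topology: "topspace (quotient_topology X q) = q ` topspace X"
proof
  show "topspace (quotient_topology X q) \<subseteq> q ` topspace X"
    unfolding topspace_def openin_quotient_topology by auto
  have "{x \<in> topspace X. q x \<in> q ` topspace X} = topspace X"
    by auto
  then have "openin (quotient_topology X q) (q ` topspace X)"
    unfolding openin_quotient_topology by simp
  then show "q ` topspace X \<subseteq> topspace (quotient_topology X q)"
    by (rule openin_subset)
qed

lemma quotient_map_quotient_topology: "quotient_map X (quotient_topology X q) q"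
  unfolding quotient_map_def topspace_quotient_topology openin_quotient_topology by auto

definition scale_on :: "nat \<Rightarrow> nat \<Rightarrow> complex \<Rightarrow> (nat list \<Rightarrow> complex) \<Rightarrow> nat list \<Rightarrow> complex" where
  "scale_on r n \<alpha> \<phi> = restrict (\<lambda>xs. \<alpha> * \<phi> xs) (tuples r n)"

lemma orbit_eq_scale_on: "orbit F r n \<phi> = {scale_on r n \<alpha> \<phi> | \<alpha>. \<alpha> \<in> hcarrier F - {0}}"
  by (simp add: orbit_def scale_on_def)

lemma scale_on_scale_on: "scale_on r n \<alpha> (scale_on r n \<beta> \<phi>) = scale_on r n (\<alpha> * \<beta>) \<phi>"
  by (auto simp: scale_on_def fun_eq_iff)

lemma scale_on_1: "\<phi> \<in> extensional (tuples r n) \<Longrightarrow> scale_on r n 1 \<phi> = \<phi>"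
  by (auto simp: scale_on_def fun_eq_iff extensional_def)

lemma orbit_self:
  "1 \<in> hcarrier F \<Longrightarrow> \<phi> \<in> extensional (tuples r n) \<Longrightarrow> \<phi> \<in> orbit F r n \<phi>"
  using scale_on_1[of \<phi> r n] by (auto simp: orbit_eq_scale_on intro!: exI[of _ 1])

lemma topspace_htop [simp]: "topspace (htop F) = hcarrier F"
  by (simp add: htop_def)

lemma topspace_fun_space_top:
  "topspace (fun_space_top F r n) = (tuples r n \<rightarrow>\<^sub>E hcarrier F) - {restrict (\<lambda>_. 0) (tuples r n)}"
  by (simp add: fun_space_top_def Int_absorb1 Diff_subset)

lemma mem_topspace_fun_space_top:
  "\<phi> \<in> topspace (fun_space_top F r n) \<longleftrightarrow> \<phi> \<in> tuples r n \<rightarrow>\<^sub>E hcarrier F \<and> (\<exists>xs \<in> tuples r n. \<phi> xs \<noteq> 0)"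
  by (auto simp: topspace_fun_space_top fun_eq_iff PiE_def extensional_def)

lemma topspace_fun_space_top_extensional:
  "\<phi> \<in> topspace (fun_space_top F r n) \<Longrightarrow> \<phi> \<in> extensional (tuples r n)"
  by (simp add: topspace_fun_space_top PiE_def)

lemma continuous_map_fun_space_top_apply:
  assumes "xs \<in> tuples r n"
  shows "continuous_map (fun_space_top F r n) euclidean (\<lambda>\<phi>. \<phi> xs)"
proof -
  have "continuous_map (product_topology (\<lambda>_. htop F) (tuples r n)) (htop F) (\<lambda>\<phi>. \<phi> xs)"
    using assms by (rule continuous_map_product_projection)
  moreover have "continuous_map (htop F) euclidean id"
    by (simp add: htop_def continuous_map_from_subtopology)
  ultimately show ?thesis
    unfolding fun_space_top_def
    by (metis continuous_map_compose continuous_map_from_subtopology id_comp)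
qed

lemma continuous_map_into_fun_space_top:
  assumes "\<And>z. z \<in> topspace Z \<Longrightarrow> g z \<in> topspace (fun_space_top F r n)"
    and "\<And>xs. xs \<in> tuples r n \<Longrightarrow> continuous_map Z euclidean (\<lambda>z. g z xs)"
  shows "continuous_map Z (fun_space_top F r n) g"
  unfolding fun_space_top_def continuous_map_in_subtopology
proof
  show "continuous_map Z (product_topology (\<lambda>_. htop F) (tuples r n)) g"
    unfolding continuous_map_componentwise
  proof (intro conjI ballI)
    show "g ` topspace Z \<subseteq> extensional (tuples r n)"
      using assms(1) by (auto simp: topspace_fun_space_top PiE_def)
    fix xs assume "xs \<in> tuples r n"
    then show "continuous_map Z (htop F) (\<lambda>z. g z xs)"
      unfolding htop_def continuous_map_in_subtopology
      using assms by (auto simp: topspace_fun_space_top)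
  qed
  show "g \<in> topspace Z \<rightarrow> topspace (product_topology (\<lambda>_. htop F) (tuples r n)) -
      {\<lambda>x\<in>tuples r n. 0}"
    using assms(1) by (auto simp: topspace_fun_space_top)
qed

context closed_hyperfield
begin

lemma orbit_scale_on:
  assumes "\<alpha> \<in> hcarrier F - {0}"
  shows "orbit F r n (scale_on r n \<alpha> \<phi>) = orbit F r n \<phi>"
proof
  show "orbit F r n (scale_on r n \<alpha> \<phi>) \<subseteq> orbit F r n \<phi>"
    unfolding orbit_eq_scale_on scale_on_scale_on using assms mult_mem by fastforce
  show "orbit F r n \<phi> \<subseteq> orbit F r n (scale_on r n \<alpha> \<phi>)"
  proof
    fix \<psi> assume "\<psi> \<in> orbit F r n \<phi>"
    then obtain \<beta> where \<beta>: "\<beta> \<in> hcarrier F - {0}" "\<psi> = scale_on r n \<beta> \<phi>"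
      by (auto simp: orbit_eq_scale_on)
    then have "\<psi> = scale_on r n (\<beta> * inverse \<alpha>) (scale_on r n \<alpha> \<phi>)"
      using assms by (simp add: scale_on_scale_on mult.assoc)
    moreover have "\<beta> * inverse \<alpha> \<in> hcarrier F - {0}"
      using assms \<beta> mult_mem inverse_mem by auto
    ultimately show "\<psi> \<in> orbit F r n (scale_on r n \<alpha> \<phi>)"
      unfolding orbit_eq_scale_on[of F r n "scale_on r n \<alpha> \<phi>"] by blast
  qed
qed

lemma orbit_eq_orbit_of_mem:
  assumes "\<psi> \<in> orbit F r n \<phi>"
  shows "orbit F r n \<psi> = orbit F r n \<phi>"
proof -
  obtain \<alpha> where "\<alpha> \<in> hcarrier F - {0}" "\<psi> = scale_on r n \<alpha> \<phi>"
    using assms by (auto simp: orbit_eq_scale_on)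
  then show ?thesis
    by (simp add: orbit_scale_on)
qed

lemma orbit_eqE:
  assumes "orbit F r n \<phi> = orbit F r n \<psi>" "\<phi> \<in> extensional (tuples r n)"
  obtains \<alpha> where "\<alpha> \<in> hcarrier F - {0}" "\<phi> = scale_on r n \<alpha> \<psi>"
  using orbit_self[OF one_mem assms(2)] assms(1) unfolding orbit_eq_scale_on[of F r n \<psi>] by auto

lemma scale_on_mem_topspace:
  "\<phi> \<in> topspace (fun_space_top F r n) \<Longrightarrow> \<alpha> \<in> hcarrier F - {0} \<Longrightarrow>
     scale_on r n \<alpha> \<phi> \<in> topspace (fun_space_top F r n)"
  unfolding mem_topspace_fun_space_top by (auto simp: scale_on_def intro!: mult_mem)

lemma continuous_map_scale_on:
  assumes "\<alpha> \<in> hcarrier F - {0}"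
  shows "continuous_map (fun_space_top F r n) (fun_space_top F r n) (scale_on r n \<alpha>)"
proof (rule continuous_map_into_fun_space_top)
  fix xs assume "xs \<in> tuples r n"
  then have "continuous_map (fun_space_top F r n) euclidean ((\<lambda>z. \<alpha> * z) \<circ> (\<lambda>\<phi>. \<phi> xs))"
    by (intro continuous_map_compose[OF continuous_map_fun_space_top_apply])
      (simp_all add: continuous_intros)
  then show "continuous_map (fun_space_top F r n) euclidean (\<lambda>\<phi>. scale_on r n \<alpha> \<phi> xs)"
    using \<open>xs \<in> tuples r n\<close> by (simp add: scale_on_def o_def)
qed (use assms scale_on_mem_topspace in blast)

lemma open_map_orbit: "open_map (fun_space_top F r n) (proj_top F r n) (orbit F r n)"
  unfolding open_map_def proj_top_def openin_quotient_topology
proof (intro allI impI conjI)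
  let ?X = "fun_space_top F r n"
  fix B assume B: "openin ?X B"
  then show "orbit F r n ` B \<subseteq> orbit F r n ` topspace ?X"
    using openin_subset by blast
  have "{\<phi> \<in> topspace ?X. orbit F r n \<phi> \<in> orbit F r n ` B}
      = (\<Union>\<alpha> \<in> hcarrier F - {0}. {\<phi> \<in> topspace ?X. scale_on r n \<alpha> \<phi> \<in> B})"
  proof (intro equalityI subsetI)
    fix \<phi> assume "\<phi> \<in> {\<phi> \<in> topspace ?X. orbit F r n \<phi> \<in> orbit F r n ` B}"
    then obtain \<psi> where \<phi>: "\<phi> \<in> topspace ?X" and \<psi>: "\<psi> \<in> B" "orbit F r n \<phi> = orbit F r n \<psi>"
      by auto
    then obtain \<alpha> where \<alpha>: "\<alpha> \<in> hcarrier F - {0}" "\<phi> = scale_on r n \<alpha> \<psi>"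
      using topspace_fun_space_top_extensional by (metis orbit_eqE)
    have "scale_on r n (inverse \<alpha>) \<phi> = \<psi>"
      using \<alpha> \<psi>(1) openin_subset[OF B] topspace_fun_space_top_extensional
      by (auto simp: scale_on_scale_on scale_on_1)
    then show "\<phi> \<in> (\<Union>\<alpha> \<in> hcarrier F - {0}. {\<phi> \<in> topspace ?X. scale_on r n \<alpha> \<phi> \<in> B})"
      using \<phi> \<psi>(1) \<alpha>(1) inverse_mem by force
  next
    fix \<phi> assume "\<phi> \<in> (\<Union>\<alpha> \<in> hcarrier F - {0}. {\<phi> \<in> topspace ?X. scale_on r n \<alpha> \<phi> \<in> B})"
    then obtain \<alpha> where "\<alpha> \<in> hcarrier F - {0}" "\<phi> \<in> topspace ?X" "scale_on r n \<alpha> \<phi> \<in> B"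
      by auto
    then show "\<phi> \<in> {\<phi> \<in> topspace ?X. orbit F r n \<phi> \<in> orbit F r n ` B}"
      using orbit_scale_on by (metis (mono_tags, lifting) image_eqI mem_Collect_eq)
  qed
  then show "openin ?X {\<phi> \<in> topspace ?X. orbit F r n \<phi> \<in> orbit F r n ` B}"
    using B by (auto intro!: openin_Union openin_continuous_map_preimage[OF continuous_map_scale_on])
qed

end

section \<open>Contracting realization spaces by radial powers\<close>

text \<open>The morphism \<open>f\<close> to \<open>F'\<close> is assumed to agree with \<open>ph\<close> on \<open>F\<close>; this covers both
\<open>ph\<close> and the map to the Krasner hyperfield on nonnegative reals.\<close>

locale radial_deformation = closed_hyperfield F for F +
  fixes F' :: hyperfield and f :: "complex \<Rightarrow> complex"
    and P :: "hyperfield \<Rightarrow> nat \<Rightarrow> nat \<Rightarrow> (nat list \<Rightarrow> complex) \<Rightarrow> bool"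
    and r n :: nat and M :: "(nat list \<Rightarrow> complex) set"
  assumes GP_kind: "P \<in> {strong_GP, weak_GP}"
    and r_pos: "0 < r"
    and one_mem': "1 \<in> hcarrier F'"
    and units_subset: "hcarrier F' - {0} \<subseteq> hcarrier F"
    and hmorphism_radial_pow: "t \<in> {0..1} \<Longrightarrow> hmorphism F F (radial_pow t)"
    and f_eq_ph: "a \<in> hcarrier F \<Longrightarrow> f a = ph a"
begin

abbreviation "X \<equiv> fun_space_top F r n"
abbreviation "q \<equiv> orbit F r n"
abbreviation "Q \<equiv> proj_top F r n"
abbreviation "R \<equiv> Real_set P F F' f r n M"
abbreviation "S \<equiv> {\<phi> \<in> topspace X. q \<phi> \<in> R}"

lemma P_mem_topspace: "P F r n \<phi> \<Longrightarrow> \<phi> \<in> topspace X"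
  using GP_kind by (auto simp: mem_topspace_fun_space_top strong_GP_def weak_GP_def)

lemma P_radial_pow:
  assumes "t \<in> {0..1}" "P F r n \<phi>"
  shows "P F r n (restrict (radial_pow t \<circ> \<phi>) (tuples r n))"
  using GP_kind assms r_pos strong_GP_hmorphism[OF hmorphism_radial_pow] weak_GP_hmorphism[OF hmorphism_radial_pow]
  by auto

lemma radial_pow_mem: "t \<in> {0..1} \<Longrightarrow> a \<in> hcarrier F \<Longrightarrow> radial_pow t a \<in> hcarrier F"
  using hmorphism_mem[OF hmorphism_radial_pow] by blast

definition deform :: "real \<Rightarrow> (nat list \<Rightarrow> complex) \<Rightarrow> nat list \<Rightarrow> complex" where
  "deform s \<phi> = restrict (radial_pow (1 - s) \<circ> \<phi>) (tuples r n)"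

lemma deform_mem_topspace: "\<phi> \<in> topspace X \<Longrightarrow> s \<in> {0..1} \<Longrightarrow> deform s \<phi> \<in> topspace X"
  by (auto simp: mem_topspace_fun_space_top deform_def intro!: radial_pow_mem)

lemma deform_0: "\<phi> \<in> topspace X \<Longrightarrow> deform 0 \<phi> = \<phi>"
  by (auto simp: topspace_fun_space_top deform_def fun_eq_iff PiE_def extensional_def radial_pow_def ph_def)

lemma deform_1: "\<phi> \<in> topspace X \<Longrightarrow> deform 1 \<phi> = restrict (f \<circ> \<phi>) (tuples r n)"
  by (auto simp: topspace_fun_space_top deform_def fun_eq_iff radial_pow_exp_0 f_eq_ph PiE_iff)

lemma f_deform:
  "\<phi> \<in> topspace X \<Longrightarrow> s \<in> {0..1} \<Longrightarrow> restrict (f \<circ> deform s \<phi>) (tuples r n) = restrict (f \<circ> \<phi>) (tuples r n)"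
  by (auto simp: topspace_fun_space_top deform_def fun_eq_iff f_eq_ph radial_pow_mem PiE_iff)

lemma orbit_deform:
  assumes "\<phi> \<in> topspace X" "q \<phi> = q \<psi>" "s \<in> {0..1}"
  shows "q (deform s \<phi>) = q (deform s \<psi>)"
proof -
  obtain \<alpha> where \<alpha>: "\<alpha> \<in> hcarrier F - {0}" "\<phi> = scale_on r n \<alpha> \<psi>"
    using assms topspace_fun_space_top_extensional by (metis orbit_eqE)
  then have "deform s \<phi> = scale_on r n (radial_pow (1 - s) \<alpha>) (deform s \<psi>)"
    by (auto simp: deform_def scale_on_def fun_eq_iff radial_pow_mult)
  moreover have "radial_pow (1 - s) \<alpha> \<in> hcarrier F - {0}"
    using \<alpha> assms(3) radial_pow_mem by auto
  ultimately show ?thesis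
    by (simp add: orbit_scale_on)
qed

lemma Real_setE:
  assumes "C \<in> R"
  obtains \<psi> \<phi> where "P F r n \<psi>" "C = q \<psi>" "\<phi> \<in> C" "orbit F' r n (restrict (f \<circ> \<phi>) (tuples r n)) = M"
  using assms unfolding Real_set_def Gr_def by auto

lemma mem_Real_set_class:
  assumes "C \<in> R" "\<phi> \<in> C"
  shows "\<phi> \<in> topspace X" "q \<phi> = C"
proof -
  obtain \<psi> where "P F r n \<psi>" "C = q \<psi>"
    using assms(1) by (auto elim: Real_setE)
  then show "\<phi> \<in> topspace X" "q \<phi> = C"
    using assms(2) P_mem_topspace scale_on_mem_topspace orbit_eq_orbit_of_mem
    by (auto simp: orbit_eq_scale_on)
qed

lemma Real_set_subset_image: "R \<subseteq> q ` S"
proof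
  fix C assume C: "C \<in> R"
  then obtain \<phi> where "\<phi> \<in> C"
    by (auto elim: Real_setE)
  then show "C \<in> q ` S"
    using mem_Real_set_class[OF C] C by (metis (mono_tags, lifting) image_eqI mem_Collect_eq)
qed

lemma topspace_subtopology_Real_set: "topspace (subtopology Q R) = R"
  using Real_set_subset_image by (auto simp: proj_top_def topspace_quotient_topology)

text \<open>Well defined on classes by \<open>orbit_deform\<close>.\<close>

definition deformation :: "real \<Rightarrow> (nat list \<Rightarrow> complex) set \<Rightarrow> (nat list \<Rightarrow> complex) set" where
  "deformation s C = q (deform s (SOME \<phi>. \<phi> \<in> C))"

lemma deformation_eq:
  assumes "C \<in> R" "\<phi> \<in> C" "s \<in> {0..1}"
  shows "deformation s C = q (deform s \<phi>)"
proof -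
  have "(SOME \<phi>. \<phi> \<in> C) \<in> C"
    using assms(2) by (rule someI[of "\<lambda>\<phi>. \<phi> \<in> C"])
  then show ?thesis
    unfolding deformation_def using assms mem_Real_set_class by (metis orbit_deform)
qed

lemma deformation_mem_Real_set:
  assumes C: "C \<in> R" and s: "s \<in> {0..1}"
  shows "deformation s C \<in> R"
proof -
  obtain \<psi> \<phi> where \<psi>: "P F r n \<psi>" "C = q \<psi>" and \<phi>: "\<phi> \<in> C"
      "orbit F' r n (restrict (f \<circ> \<phi>) (tuples r n)) = M"
    using C by (rule Real_setE)
  have \<psi>_mem: "\<psi> \<in> C"
    using \<psi> P_mem_topspace orbit_self[OF one_mem] topspace_fun_space_top_extensional by blast
  have "deformation s C = q (deform s \<psi>)"
    using deformation_eq[OF C \<psi>_mem s] .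
  moreover have "P F r n (deform s \<psi>)"
    unfolding deform_def using P_radial_pow \<psi>(1) s by auto
  ultimately have "deformation s C \<in> Gr P F r n"
    unfolding Gr_def by auto
  moreover have "deform s \<phi> \<in> deformation s C"
    using deformation_eq[OF C \<phi>(1) s] orbit_self[OF one_mem] deform_mem_topspace[OF _ s]
      mem_Real_set_class[OF C \<phi>(1)] topspace_fun_space_top_extensional by metis
  moreover have "orbit F' r n (restrict (f \<circ> deform s \<phi>) (tuples r n)) = M"
    using f_deform mem_Real_set_class[OF C \<phi>(1)] s \<phi>(2) by simp
  ultimately show ?thesis
    unfolding Real_set_def by auto
qed

lemma deformation_0:
  assumes "C \<in> R"
  shows "deformation 0 C = C"
proof -
  obtain \<phi> where "\<phi> \<in> C"
    using assms by (auto elim: Real_setE)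
  then show ?thesis
    using deformation_eq[OF assms] deform_0 mem_Real_set_class[OF assms] by simp
qed

lemma orbit_eq_if_orbit'_eq:
  assumes "orbit F' r n \<theta> = orbit F' r n \<theta>'" "\<theta> \<in> extensional (tuples r n)"
  shows "q \<theta> = q \<theta>'"
proof -
  have "\<theta> \<in> orbit F' r n \<theta>"
    using one_mem' assms(2) by (rule orbit_self)
  then obtain \<beta> where "\<beta> \<in> hcarrier F' - {0}" "\<theta> = scale_on r n \<beta> \<theta>'"
    using assms(1) by (auto simp: orbit_eq_scale_on)
  then show ?thesis
    using units_subset by (auto simp: orbit_scale_on)
qed

lemma deformation_1:
  assumes "C \<in> R" "C' \<in> R"
  shows "deformation 1 C = deformation 1 C'"
proof -
  have deformation_1_eq: "deformation 1 C = q (restrict (f \<circ> \<phi>) (tuples r n))"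
    if "C \<in> R" "\<phi> \<in> C" for C \<phi>
    using deformation_eq[OF that] deform_1 mem_Real_set_class[OF that] by simp
  obtain \<phi> where \<phi>: "\<phi> \<in> C" "orbit F' r n (restrict (f \<circ> \<phi>) (tuples r n)) = M"
    using assms(1) by (auto elim: Real_setE)
  obtain \<phi>' where \<phi>': "\<phi>' \<in> C'" "orbit F' r n (restrict (f \<circ> \<phi>') (tuples r n)) = M"
    using assms(2) by (auto elim: Real_setE)
  show ?thesis
    using \<phi> \<phi>' assms by (simp add: deformation_1_eq orbit_eq_if_orbit'_eq)
qed

lemma support_Real_set:
  assumes "\<phi> \<in> S" "xs \<in> tuples r n"
  shows "\<phi> xs = 0 \<longleftrightarrow> (\<forall>\<mu> \<in> M. \<mu> xs = 0)"
proof -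
  obtain \<phi>' where \<phi>': "\<phi>' \<in> q \<phi>" "orbit F' r n (restrict (f \<circ> \<phi>') (tuples r n)) = M"
    using assms(1) by (auto elim: Real_setE)
  then obtain \<alpha> where \<alpha>: "\<alpha> \<in> hcarrier F - {0}" "\<phi>' = scale_on r n \<alpha> \<phi>"
    by (auto simp: orbit_eq_scale_on)
  have "\<phi> xs \<in> hcarrier F"
    using assms by (auto simp: topspace_fun_space_top PiE_iff)
  then have "\<phi> xs = 0 \<longleftrightarrow> f (\<phi>' xs) = 0"
    using \<alpha> assms(2) by (simp add: scale_on_def f_eq_ph mult_mem)
  also have "\<dots> \<longleftrightarrow> (\<forall>\<mu> \<in> M. \<mu> xs = 0)"
  proof
    assume "f (\<phi>' xs) = 0"
    then show "\<forall>\<mu> \<in> M. \<mu> xs = 0"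
      using \<phi>'(2)[symmetric] assms(2) by (auto simp: orbit_eq_scale_on scale_on_def)
  next
    assume "\<forall>\<mu> \<in> M. \<mu> xs = 0"
    moreover have "restrict (f \<circ> \<phi>') (tuples r n) \<in> M"
      using \<phi>'(2) orbit_self[OF one_mem'] by auto
    ultimately show "f (\<phi>' xs) = 0"
      using assms(2) by fastforce
  qed
  finally show ?thesis .
qed

abbreviation "Z \<equiv> prod_topology (top_of_set {0..1::real}) (subtopology X S)"

text \<open>A coordinate vanishes either on all of \<open>S\<close> or nowhere on \<open>S\<close> (\<open>support_Real_set\<close>), so
\<open>radial_pow\<close> is only evaluated away from its discontinuity at 0.\<close>

lemma continuous_map_deform_apply:
  assumes xs: "xs \<in> tuples r n"
  shows "continuous_map Z euclidean (\<lambda>p. deform (fst p) (snd p) xs)"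
proof (cases "\<forall>\<mu> \<in> M. \<mu> xs = 0")
  case True
  show ?thesis
  proof (rule continuous_map_eq[of _ _ "\<lambda>_. 0"])
    fix p assume "p \<in> topspace Z"
    then show "0 = deform (fst p) (snd p) xs"
      using True support_Real_set[OF _ xs] xs by (auto simp: deform_def)
  qed simp
next
  case False
  then have nonzero: "snd p xs \<noteq> 0" if "p \<in> topspace Z" for p
    using support_Real_set[OF _ xs] that by auto
  have "continuous_map Z euclidean (\<lambda>p. 1 - fst p)"
    using continuous_map_fst[of "top_of_set {0..1::real}" "subtopology X S"]
    by (intro continuous_intros) (simp add: continuous_map_in_subtopology)
  moreover have "continuous_map Z euclidean ((\<lambda>\<phi>. \<phi> xs) \<circ> snd)"
    by (intro continuous_map_compose[OF continuous_map_snd] continuous_map_from_subtopology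
        continuous_map_fun_space_top_apply xs)
  ultimately have "continuous_map Z (top_of_set (UNIV \<times> (UNIV - {0}))) (\<lambda>p. (1 - fst p, snd p xs))"
    unfolding prod_topology_subtopology_eu[symmetric] continuous_map_paired continuous_map_in_subtopology
    using nonzero by (auto simp: o_def)
  then have "continuous_map Z euclidean ((\<lambda>p. radial_pow (fst p) (snd p)) \<circ> (\<lambda>p. (1 - fst p, snd p xs)))"
    using continuous_map_iff_continuous[THEN iffD2, OF continuous_on_radial_pow]
    by (rule continuous_map_compose)
  then show ?thesis
    using xs by (simp add: deform_def o_def)
qed

lemma continuous_map_deform: "continuous_map Z X (\<lambda>p. deform (fst p) (snd p))"
  by (rule continuous_map_into_fun_space_top) (auto simp: deform_mem_topspace continuous_map_deform_apply)

lemma continuous_map_orbit: "continuous_map X Q q"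
  unfolding proj_top_def by (rule quotient_imp_continuous_map[OF quotient_map_quotient_topology])

lemma quotient_map_orbit_Real_set: "quotient_map (subtopology X S) (subtopology Q R) q"
proof (rule continuous_open_imp_quotient_map)
  show "continuous_map (subtopology X S) (subtopology Q R) q"
    unfolding continuous_map_in_subtopology
    by (auto intro: continuous_map_from_subtopology continuous_map_orbit)
  show "open_map (subtopology X S) (subtopology Q R) q"
    by (rule open_map_restriction[OF open_map_orbit]) simp
  show "q ` topspace (subtopology X S) = topspace (subtopology Q R)"
    unfolding topspace_subtopology_Real_set using Real_set_subset_image by auto
qed

lemma continuous_map_deformation:
  "continuous_map (prod_topology (top_of_set {0..1}) (subtopology Q R)) (subtopology Q R)
     (\<lambda>p. deformation (fst p) (snd p))"
proof (rule continuous_compose_quotient_map)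
  have "locally_compact_space (top_of_set {0..1::real})"
    by (simp add: compact_imp_locally_compact_space compact_space_subtopology compactin_euclidean_iff)
  moreover have "Hausdorff_space (top_of_set {0..1::real})"
    by (simp add: Hausdorff_space_subtopology)
  ultimately show "quotient_map Z (prod_topology (top_of_set {0..1}) (subtopology Q R)) (\<lambda>(s, \<phi>). (s, q \<phi>))"
    using quotient_map_prod_right quotient_map_orbit_Real_set by blast
  let ?lift = "(\<lambda>p. deformation (fst p) (snd p)) \<circ> (\<lambda>(s, \<phi>). (s, q \<phi>))"
  have "continuous_map Z Q (q \<circ> (\<lambda>p. deform (fst p) (snd p)))"
    by (rule continuous_map_compose[OF continuous_map_deform continuous_map_orbit])
  moreover have "(q \<circ> (\<lambda>p. deform (fst p) (snd p))) p = ?lift p" if p: "p \<in> topspace Z" for p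
  proof -
    obtain s \<phi> where p: "p = (s, \<phi>)" "s \<in> {0..1}" "\<phi> \<in> S"
      using p by (cases p) auto
    then have "\<phi> \<in> q \<phi>"
      using orbit_self[OF one_mem] topspace_fun_space_top_extensional by blast
    with p show ?thesis
      by (simp add: deformation_eq)
  qed
  ultimately have "continuous_map Z Q ?lift"
    by (rule continuous_map_eq)
  moreover have "?lift ` topspace Z \<subseteq> R"
    using deformation_mem_Real_set by auto
  ultimately show "continuous_map Z (subtopology Q R) ?lift"
    by (simp only: continuous_map_in_subtopology image_subset_iff_funcset)
qed

theorem contractible_space_Real_top: "contractible_space (Real_top P F F' f r n M)"
proof (cases "R = {}")
  case True
  then show ?thesis
    by (simp add: Real_top_def)
next
  case False
  then obtain C\<^sub>0 where C\<^sub>0: "C\<^sub>0 \<in> R"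
    by blast
  have "homotopic_with (\<lambda>_. True) (subtopology Q R) (subtopology Q R) id (\<lambda>_. deformation 1 C\<^sub>0)"
    unfolding homotopic_with[where P = "\<lambda>_. True", simplified]
    using continuous_map_deformation deformation_0 deformation_1[OF _ C\<^sub>0]
    by (intro exI[of _ "\<lambda>p. deformation (fst p) (snd p)"]) (auto simp: topspace_subtopology_Real_set)
  then show ?thesis
    unfolding contractible_space_def Real_top_def by blast
qed

lemma contractible_nonempty_Real_set:
  assumes F': "closed_hyperfield F'" and incl: "hmorphism F' F id" and M: "M \<in> Gr P F' r n"
    and f_id: "\<And>a. a \<in> hcarrier F' \<Longrightarrow> f a = a"
  shows "contractible_space (Real_top P F F' f r n M) \<and> Real_set P F F' f r n M \<noteq> {}"
proof
  show "contractible_space (Real_top P F F' f r n M)"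
    by (rule contractible_space_Real_top)
  obtain \<psi> where \<psi>: "P F' r n \<psi>" "M = orbit F' r n \<psi>"
    using M by (auto simp: Gr_def)
  have \<psi>_PiE: "\<psi> \<in> tuples r n \<rightarrow>\<^sub>E hcarrier F'"
    using \<psi>(1) GP_kind by (auto simp: strong_GP_def weak_GP_def)
  then have \<psi>_eq: "restrict (g \<circ> \<psi>) (tuples r n) = \<psi>" if "\<And>a. a \<in> hcarrier F' \<Longrightarrow> g a = a" for g
    using that by (auto simp: fun_eq_iff PiE_iff extensional_def)
  have "P F r n (restrict (id \<circ> \<psi>) (tuples r n))"
    using GP_kind \<psi>(1) r_pos closed_hyperfield.strong_GP_hmorphism[OF F' incl]
      closed_hyperfield.weak_GP_hmorphism[OF F' incl] by auto
  then have "P F r n \<psi>"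
    using \<psi>_eq[of id] by simp
  moreover have "\<psi> \<in> q \<psi>"
    using \<psi>_PiE orbit_self[OF one_mem] by (auto simp: PiE_def)
  moreover have "orbit F' r n (restrict (f \<circ> \<psi>) (tuples r n)) = M"
    using \<psi>(2) \<psi>_eq f_id by simp
  ultimately have "q \<psi> \<in> Real_set P F F' f r n M"
    by (auto simp: Real_set_def Gr_def)
  then show "Real_set P F F' f r n M \<noteq> {}"
    by blast
qed

end

lemma toK_Krasner: "a \<in> hcarrier Krasner \<Longrightarrow> toK a = a"
  by (auto simp: Krasner_def toK_def)

lemma ph_Sign: "a \<in> hcarrier Sign \<Longrightarrow> ph a = a"
  by (auto simp: Sign_def ph_def)

lemma ph_Phase: "a \<in> hcarrier Phase \<Longrightarrow> ph a = a"
  by (auto simp: Phase_def ph_def)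

lemma Gr_strong_Krasner_subset_weak: "0 < r \<Longrightarrow> Gr strong_GP Krasner r n \<subseteq> Gr weak_GP Krasner r n"
  by (auto simp: Gr_def intro: strong_GP_Krasner_imp_weak_GP)

lemma radial_deformation_Triangle:
  "P \<in> {strong_GP, weak_GP} \<Longrightarrow> 0 < r \<Longrightarrow> radial_deformation Triangle Krasner toK P r"
  unfolding radial_deformation_def radial_deformation_axioms_def
  using closed_hyperfield_Triangle hmorphism_radial_pow_Triangle
  by (auto simp: Triangle_def Krasner_def toK_def ph_def)

lemma radial_deformation_TropTriangle:
  "0 < r \<Longrightarrow> radial_deformation TropTriangle Krasner toK strong_GP r"
  unfolding radial_deformation_def radial_deformation_axioms_def
  using closed_hyperfield_TropTriangle hmorphism_radial_pow_TropTriangle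
  by (auto simp: TropTriangle_def Krasner_def toK_def ph_def)

lemma radial_deformation_TropReal:
  "0 < r \<Longrightarrow> radial_deformation TropReal Sign ph strong_GP r"
  unfolding radial_deformation_def radial_deformation_axioms_def
  using closed_hyperfield_TropReal hmorphism_radial_pow_TropReal
  by (auto simp: TropReal_def Sign_def)

lemma radial_deformation_TropComplex:
  "P \<in> {strong_GP, weak_GP} \<Longrightarrow> 0 < r \<Longrightarrow> radial_deformation TropComplex Phase ph P r"
  unfolding radial_deformation_def radial_deformation_axioms_def
  using closed_hyperfield_TropComplex hmorphism_radial_pow_TropComplex
  by (auto simp: TropComplex_def Phase_def)

theorem corollary5p4:
  fixes r n :: nat
  assumes "0 < r"
  shows
   "(\<forall>P \<in> {strong_GP, weak_GP}. \<forall>M \<in> Gr strong_GP Krasner r n.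
        contractible_space (Real_top P Triangle Krasner toK r n M) \<and>
        Real_set P Triangle Krasner toK r n M \<noteq> {})
    \<and> (\<forall>M \<in> Gr strong_GP Krasner r n.
        contractible_space (Real_top strong_GP TropTriangle Krasner toK r n M) \<and>
        Real_set strong_GP TropTriangle Krasner toK r n M \<noteq> {})
    \<and> (\<forall>M \<in> Gr strong_GP Sign r n.
        contractible_space (Real_top strong_GP TropReal Sign ph r n M) \<and>
        Real_set strong_GP TropReal Sign ph r n M \<noteq> {})
    \<and> (\<forall>P \<in> {strong_GP, weak_GP}. \<forall>M \<in> Gr P Phase r n.
        contractible_space (Real_top P TropComplex Phase ph r n M) \<and>
        Real_set P TropComplex Phase ph r n M \<noteq> {})"
proof -
  have "contractible_space (Real_top P Triangle Krasner toK r n M) \<and>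
      Real_set P Triangle Krasner toK r n M \<noteq> {}"
    if P: "P \<in> {strong_GP, weak_GP}" and "M \<in> Gr strong_GP Krasner r n" for P M
  proof -
    have "M \<in> Gr P Krasner r n"
      using that Gr_strong_Krasner_subset_weak[OF assms] by auto
    then show ?thesis
      using toK_Krasner by (rule radial_deformation.contractible_nonempty_Real_set[OF radial_deformation_Triangle[OF P assms]
          closed_hyperfield_Krasner hmorphism_Krasner_Triangle])
  qed
  moreover have "contractible_space (Real_top strong_GP TropTriangle Krasner toK r n M) \<and>
      Real_set strong_GP TropTriangle Krasner toK r n M \<noteq> {}"
    if "M \<in> Gr strong_GP Krasner r n" for M
    using that toK_Krasner by (rule radial_deformation.contractible_nonempty_Real_set[OF
        radial_deformation_TropTriangle[OF assms] closed_hyperfield_Krasner hmorphism_Krasner_TropTriangle])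
  moreover have "contractible_space (Real_top strong_GP TropReal Sign ph r n M) \<and>
      Real_set strong_GP TropReal Sign ph r n M \<noteq> {}"
    if "M \<in> Gr strong_GP Sign r n" for M
    using that ph_Sign by (rule radial_deformation.contractible_nonempty_Real_set[OF
        radial_deformation_TropReal[OF assms] closed_hyperfield_Sign hmorphism_Sign_TropReal])
  moreover have "contractible_space (Real_top P TropComplex Phase ph r n M) \<and>
      Real_set P TropComplex Phase ph r n M \<noteq> {}"
    if P: "P \<in> {strong_GP, weak_GP}" and "M \<in> Gr P Phase r n" for P M
    using that(2) ph_Phase by (rule radial_deformation.contractible_nonempty_Real_set[OF
        radial_deformation_TropComplex[OF P assms] closed_hyperfield_Phase hmorphism_Phase_TropComplex])
  ultimately show ?thesis
    by blast
qed

end
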